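(* The output of MPS is not always decomposable, even under lexicographic preferences. Concretely, for $n=3$, $p=2$, $D_F=\{1_F,2_F,3_F\}$, $D_B=\{1_B,2_B,3_B\}$ and the lexicographic preferences: agent 1: $F\rhd_1 B$, $1_F\rhd 2_F\rhd 3_F$, $1_B\rhd 2_B\rhd 3_B$; agent 2: $F\rhd_2 B$, $1_F\rhd 2_F\rhd 3_F$, $1_B\rhd 3_B\rhd 2_B$; agent 3: $B\rhd_3 F$, $1_F\rhd 2_F\rhd 3_F$, $2_B\rhd 3_B\rhd 1_B$, the assignment $\mathrm{MPS}(R)$ is not decomposable.
   Context: Setting: agents $N=\{1,\dots,n\}$; types $D_i$ pairwise disjoint, $|D_i|=n$, unit supply; bundles $\mathcal D=\prod_i D_i$, $x_i$ the type-$i$ component. An assignment is an $n\times|\mathcal D|$ matrix $(p_{j,x})$ with entries in $[0,1]$, rows summing to $1$, and $\sum_j\sum_{x\ni o}p_{j,x}=1$ for each item $o$; it is discrete if all entries are in $\{0,1\}$ and decomposable if it is a convex combination of discrete assignments. Lexicographic preference: importance order $\rhd_j$ on types and orders $\rhd^i_j$ on each $D_i$; $x\succ_j y$ iff some type $i$ has $x_i\rhd^i_j y_i$ and $x_{i'}=y_{i'}$ for all $i'\rhd_j i$. MPS: items start with supply $1$; a bundle is available if all its items have positive remaining supply. Continuously in time each agent eats her most preferred available bundle at rate $1$ (each item of it consumed at rate $1$, $p_{j,x}$ growing at rate $1$); exhausted items make all bundles containing them unavailable; run until all items are exhausted. *)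

theory Defs
  imports Complex_Main
begin

text \<open>Encoding (0-indexed): agents are 0..<n, types are 0..<p, the items of type i
  are the pairs (i,k) with k < n.  A bundle is a list x of length p with x!i < n,
  its type-i component being the item (i, x!i).  An assignment is a function
  P :: agent \<Rightarrow> bndl \<Rightarrow> real (only agents < n and bundles in mps_bundles matter).\<close>

type_synonym mitem = "nat \<times> nat"
type_synonym bndl = "nat list"
type_synonym assignment = "nat \<Rightarrow> bndl \<Rightarrow> real"

definition mps_items :: "nat \<Rightarrow> nat \<Rightarrow> mitem set" where
  "mps_items n p = {(i, k). i < p \<and> k < n}"

definition mps_bundles :: "nat \<Rightarrow> nat \<Rightarrow> bndl set" where
  "mps_bundles n p = {x. length x = p \<and> (\<forall>i<p. x ! i < n)}"

definition bundle_contains :: "bndl \<Rightarrow> mitem \<Rightarrow> bool" where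
  "bundle_contains x it \<longleftrightarrow> fst it < length x \<and> x ! fst it = snd it"

definition is_assignment :: "nat \<Rightarrow> nat \<Rightarrow> assignment \<Rightarrow> bool" where
  "is_assignment n p P \<longleftrightarrow>
     (\<forall>j<n. \<forall>x\<in>mps_bundles n p. 0 \<le> P j x \<and> P j x \<le> 1)
   \<and> (\<forall>j<n. (\<Sum>x\<in>mps_bundles n p. P j x) = 1)
   \<and> (\<forall>it\<in>mps_items n p. (\<Sum>j<n. \<Sum>x\<in>{x\<in>mps_bundles n p. bundle_contains x it}. P j x) = 1)"

definition is_discrete_assignment :: "nat \<Rightarrow> nat \<Rightarrow> assignment \<Rightarrow> bool" where
  "is_discrete_assignment n p P \<longleftrightarrow> is_assignment n p P
     \<and> (\<forall>j<n. \<forall>x\<in>mps_bundles n p. P j x \<in> {0, 1})"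

definition decomposable :: "nat \<Rightarrow> nat \<Rightarrow> assignment \<Rightarrow> bool" where
  "decomposable n p P \<longleftrightarrow>
     (\<exists>(K::nat) (Q :: nat \<Rightarrow> assignment) (w :: nat \<Rightarrow> real).
        (\<forall>l<K. is_discrete_assignment n p (Q l) \<and> 0 \<le> w l)
      \<and> (\<Sum>l<K. w l) = 1
      \<and> (\<forall>j<n. \<forall>x\<in>mps_bundles n p. P j x = (\<Sum>l<K. w l * Q l j x)))"

text \<open>Lexicographic preference.  imp i is the importance rank of type i (smaller =
  more important); rk i k is the rank of item (i,k) in the order on D_i
  (smaller = better).  lex_pref p imp rk x y means x is strictly preferred to y.\<close>
definition lex_pref :: "nat \<Rightarrow> (nat \<Rightarrow> nat) \<Rightarrow> (nat \<Rightarrow> nat \<Rightarrow> nat) \<Rightarrow> bndl \<Rightarrow> bndl \<Rightarrow> bool" where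
  "lex_pref p imp rk x y \<longleftrightarrow>
     (\<exists>i<p. rk i (x ! i) < rk i (y ! i) \<and> (\<forall>i'<p. imp i' < imp i \<longrightarrow> x ! i' = y ! i'))"

text \<open>MPS as an event-driven simulation of the continuous eating process.  Between two
  consecutive exhaustion events every agent eats a fixed bundle, so the process is
  piecewise linear; one step advances to the next exhaustion time.
  pref j x y: agent j strictly prefers bundle x to bundle y.\<close>

type_synonym mps_state = "(mitem \<Rightarrow> real) \<times> assignment"

definition available :: "nat \<Rightarrow> nat \<Rightarrow> (mitem \<Rightarrow> real) \<Rightarrow> bndl \<Rightarrow> bool" where
  "available n p s x \<longleftrightarrow> x \<in> mps_bundles n p \<and> (\<forall>i<p. 0 < s (i, x ! i))"

definition eats :: "nat \<Rightarrow> nat \<Rightarrow> (nat \<Rightarrow> bndl \<Rightarrow> bndl \<Rightarrow> bool) \<Rightarrow> (mitem \<Rightarrow> real) \<Rightarrow> nat \<Rightarrow> bndl" where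
  "eats n p pref s j = (SOME x. available n p s x \<and> (\<forall>y. available n p s y \<longrightarrow> \<not> pref j y x))"

definition eat_rate :: "nat \<Rightarrow> nat \<Rightarrow> (nat \<Rightarrow> bndl \<Rightarrow> bndl \<Rightarrow> bool) \<Rightarrow> (mitem \<Rightarrow> real) \<Rightarrow> mitem \<Rightarrow> real" where
  "eat_rate n p pref s it = real (card {j. j < n \<and> bundle_contains (eats n p pref s j) it})"

definition next_event :: "nat \<Rightarrow> nat \<Rightarrow> (nat \<Rightarrow> bndl \<Rightarrow> bndl \<Rightarrow> bool) \<Rightarrow> (mitem \<Rightarrow> real) \<Rightarrow> real" where
  "next_event n p pref s = Min {s it / eat_rate n p pref s it | it.
       it \<in> mps_items n p \<and> 0 < s it \<and> 0 < eat_rate n p pref s it}"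

definition mps_step :: "nat \<Rightarrow> nat \<Rightarrow> (nat \<Rightarrow> bndl \<Rightarrow> bndl \<Rightarrow> bool) \<Rightarrow> mps_state \<Rightarrow> mps_state" where
  "mps_step n p pref st =
     (let s = fst st; P = snd st in
      if \<exists>it\<in>mps_items n p. 0 < s it then
        (let dt = next_event n p pref s in
          (\<lambda>it. s it - dt * eat_rate n p pref s it,
           \<lambda>j x. P j x + (if j < n \<and> x = eats n p pref s j then dt else 0)))
      else st)"

text \<open>Every step exhausts at least one item, so after |items| = p*n steps all
  items are exhausted (further steps are the identity).\<close>
definition MPS :: "nat \<Rightarrow> nat \<Rightarrow> (nat \<Rightarrow> bndl \<Rightarrow> bndl \<Rightarrow> bool) \<Rightarrow> assignment" where
  "MPS n p pref = snd ((mps_step n p pref ^^ (p * n)) (\<lambda>_. 1, \<lambda>_ _. 0))"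

text \<open>The concrete example: n = 3 agents, p = 2 types, type 0 = F, type 1 = B;
  item k of a type corresponds to the paper's (k+1).\<close>
definition ex_imp :: "nat \<Rightarrow> nat \<Rightarrow> nat" where
  "ex_imp j i = (if j = 2 then (if i = 1 then 0 else 1) else i)"

definition ex_rank :: "nat \<Rightarrow> nat \<Rightarrow> nat \<Rightarrow> nat" where
  "ex_rank j i k = [[[0,1,2],[0,1,2]], [[0,1,2],[0,2,1]], [[0,1,2],[2,0,1]]] ! j ! i ! k"

definition ex_pref :: "nat \<Rightarrow> bndl \<Rightarrow> bndl \<Rightarrow> bool" where
  "ex_pref j = lex_pref 2 (ex_imp j) (ex_rank j)"

end

(* The eating process on the example runs in five phases of lengths 1/3, 1/6, 1/6, 1/12, 1/4.
   Agent 3 receives (3_F, 3_B) with probability 1/4, whereas agents 1 and 2 together receive a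
   bundle containing 2_B but not 3_F with probability only 1/6.  In a discrete assignment giving
   (3_F, 3_B) to agent 3, item 2_B must go to agent 1 or 2 in a bundle avoiding 3_F, so the first
   quantity never exceeds the second.  Being linear, this inequality passes to convex combinations
   of discrete assignments, which MPS(R) violates. *)

theory Submission
  imports Defs
begin

(* A schedule is a list of phases (d, E) of the eating process: during d time units agent j
   eats bundle E ! j. *)

definition demand :: "bndl list \<Rightarrow> mitem \<Rightarrow> real" where
  "demand E it = real (length (filter (\<lambda>x. bundle_contains x it) E))"

definition remaining_supply :: "(real \<times> bndl list) list \<Rightarrow> mitem \<Rightarrow> real" where
  "remaining_supply phs it = 1 - (\<Sum>(d, E)\<leftarrow>phs. d * demand E it)"

definition eaten :: "(real \<times> bndl list) list \<Rightarrow> assignment" where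
  "eaten phs j x = (\<Sum>(d, E)\<leftarrow>phs. if j < length E \<and> x = E ! j then d else 0)"

definition mps_phase :: "nat \<Rightarrow> nat \<Rightarrow> (nat \<Rightarrow> bndl \<Rightarrow> bndl \<Rightarrow> bool) \<Rightarrow> (mitem \<Rightarrow> real)
    \<Rightarrow> real \<times> bndl list \<Rightarrow> bool" where
  "mps_phase n p pref s ph \<longleftrightarrow> length (snd ph) = n
     \<and> (\<forall>j<n. eats n p pref s j = snd ph ! j)
     \<and> (\<exists>it\<in>mps_items n p. 0 < s it)
     \<and> next_event n p pref s = fst ph"

definition is_mps_schedule :: "nat \<Rightarrow> nat \<Rightarrow> (nat \<Rightarrow> bndl \<Rightarrow> bndl \<Rightarrow> bool)
    \<Rightarrow> (real \<times> bndl list) list \<Rightarrow> bool" where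
  "is_mps_schedule n p pref phs \<longleftrightarrow> length phs \<le> p * n
     \<and> (\<forall>k<length phs. mps_phase n p pref (remaining_supply (take k phs)) (phs ! k))
     \<and> (\<forall>it\<in>mps_items n p. remaining_supply phs it = 0)"

lemma eat_rate_eq_demand:
  assumes "length E = n" and "\<forall>j<n. eats n p pref s j = E ! j"
  shows "eat_rate n p pref s it = demand E it"
proof -
  have "{j. j < n \<and> bundle_contains (eats n p pref s j) it} = {j. j < length E \<and> bundle_contains (E ! j) it}"
    using assms by auto
  then show ?thesis
    by (simp add: eat_rate_def demand_def length_filter_conv_card)
qed

lemma next_event_eq_demand:
  assumes "length E = n" and "\<forall>j<n. eats n p pref s j = E ! j"
  shows "next_event n p pref s
    = Min ((\<lambda>it. s it / demand E it) ` (mps_items n p \<inter> {it. 0 < s it \<and> 0 < demand E it}))"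
proof -
  have "eat_rate n p pref s = demand E" using eat_rate_eq_demand[OF assms] by blast
  then show ?thesis unfolding next_event_def by (simp only:) (intro arg_cong[where f = Min]; blast)
qed

lemma mps_step_phase:
  assumes "mps_phase n p pref (remaining_supply phs) (d, E)"
  shows "mps_step n p pref (remaining_supply phs, eaten phs)
       = (remaining_supply (phs @ [(d, E)]), eaten (phs @ [(d, E)]))"
proof -
  from assms have E: "length E = n" "\<forall>j<n. eats n p pref (remaining_supply phs) j = E ! j"
    and pos: "\<exists>it\<in>mps_items n p. 0 < remaining_supply phs it"
    and d: "next_event n p pref (remaining_supply phs) = d"
    by (simp_all add: mps_phase_def)
  have rate: "eat_rate n p pref (remaining_supply phs) = demand E"
    using eat_rate_eq_demand[OF E] by blast
  show ?thesis
    using pos E by (auto simp: mps_step_def Let_def d rate remaining_supply_def eaten_def fun_eq_iff)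
qed

lemma mps_step_exhausted:
  assumes "\<forall>it\<in>mps_items n p. s it = 0"
  shows "mps_step n p pref (s, P) = (s, P)"
  using assms by (simp add: mps_step_def)

lemma mps_steps_schedule:
  assumes "\<forall>k<length phs. mps_phase n p pref (remaining_supply (take k phs)) (phs ! k)"
  and "m \<le> length phs"
  shows "(mps_step n p pref ^^ m) (\<lambda>_. 1, \<lambda>_ _. 0) = (remaining_supply (take m phs), eaten (take m phs))"
  using assms(2)
proof (induction m)
  case 0
  then show ?case by (simp add: remaining_supply_def eaten_def fun_eq_iff)
next
  case (Suc m)
  then have "take (Suc m) phs = take m phs @ [phs ! m]" by (simp add: take_Suc_conv_app_nth)
  with Suc assms(1) show ?case
    using mps_step_phase[of n p pref "take m phs" "fst (phs ! m)" "snd (phs ! m)"] by simp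
qed

lemma MPS_eq_eaten:
  assumes "is_mps_schedule n p pref phs"
  shows "MPS n p pref = eaten phs"
proof -
  from assms have len: "length phs \<le> p * n"
    and phases: "\<forall>k<length phs. mps_phase n p pref (remaining_supply (take k phs)) (phs ! k)"
    and exhausted: "\<forall>it\<in>mps_items n p. remaining_supply phs it = 0"
    by (simp_all add: is_mps_schedule_def)
  have idle: "(mps_step n p pref ^^ m) (remaining_supply phs, eaten phs) = (remaining_supply phs, eaten phs)" for m
    by (induction m) (simp_all add: mps_step_exhausted[OF exhausted])
  obtain r where "p * n = r + length phs" using len le_add_diff_inverse2 by metis
  then have "(mps_step n p pref ^^ (p * n)) (\<lambda>_. 1, \<lambda>_ _. 0)
      = (mps_step n p pref ^^ r) ((mps_step n p pref ^^ length phs) (\<lambda>_. 1, \<lambda>_ _. 0))"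
    by (simp only: funpow_add comp_apply)
  also have "\<dots> = (remaining_supply phs, eaten phs)"
    using mps_steps_schedule[OF phases order_refl] idle by simp
  finally show ?thesis by (simp add: MPS_def)
qed

lemma eats_eqI:
  assumes "available n p s x"
    and "\<forall>y\<in>mps_bundles n p. available n p s y \<and> y \<noteq> x \<longrightarrow> pref j x y \<and> \<not> pref j y x"
    and "\<not> pref j x x"
  shows "eats n p pref s j = x"
  unfolding eats_def by (rule some_equality) (use assms in \<open>auto simp: available_def\<close>)

lemma lex_pref_irrefl: "\<not> lex_pref p imp rk x x"
  by (simp add: lex_pref_def)

lemma lex_pref_two_types:
  "lex_pref 2 imp rk x y \<longleftrightarrow>
     rk 0 (x ! 0) < rk 0 (y ! 0) \<and> (imp 1 < imp 0 \<longrightarrow> x ! 1 = y ! 1)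
   \<or> rk 1 (x ! 1) < rk 1 (y ! 1) \<and> (imp 0 < imp 1 \<longrightarrow> x ! 0 = y ! 0)"
  by (auto simp: lex_pref_def numeral_2_eq_2 All_less_Suc Ex_less_Suc)

lemma available_two_types:
  "available n 2 s x \<longleftrightarrow> x \<in> mps_bundles n 2 \<and> 0 < s (0, x ! 0) \<and> 0 < s (1, x ! 1)"
  by (auto simp: available_def numeral_2_eq_2 All_less_Suc)

lemma sum_eq_one_others_zero:
  fixes f :: "'a \<Rightarrow> real"
  assumes "finite A" "\<forall>x\<in>A. 0 \<le> f x" "sum f A = 1" "a \<in> A" "f a = 1" "b \<in> A" "b \<noteq> a"
  shows "f b = 0"
proof -
  have "sum f (A - {a}) = 0" using assms by (simp add: sum.remove)
  then show ?thesis using assms sum_nonneg_eq_0_iff[of "A - {a}" f] by auto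
qed

lemma finite_mps_bundles: "finite (mps_bundles n p)"
proof (rule finite_subset)
  show "mps_bundles n p \<subseteq> {xs. set xs \<subseteq> {..<n} \<and> length xs = p}"
    by (auto simp: mps_bundles_def in_set_conv_nth)
qed (simp add: finite_lists_length_eq)

lemma assignment_row_exclusive:
  assumes "is_assignment n p P" "j < n" "x \<in> mps_bundles n p" "P j x = 1"
    "y \<in> mps_bundles n p" "y \<noteq> x"
  shows "P j y = 0"
proof -
  have "\<forall>y\<in>mps_bundles n p. 0 \<le> P j y" "sum (P j) (mps_bundles n p) = 1"
    using assms(1,2) by (simp_all add: is_assignment_def)
  from sum_eq_one_others_zero[OF finite_mps_bundles this assms(3-6)] show ?thesis .
qed

lemma assignment_item_exclusive:
  assumes "is_assignment n p P" "it \<in> mps_items n p"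
    "j < n" "x \<in> mps_bundles n p" "bundle_contains x it" "P j x = 1"
    "j' < n" "y \<in> mps_bundles n p" "bundle_contains y it" "(j', y) \<noteq> (j, x)"
  shows "P j' y = 0"
proof -
  let ?S = "SIGMA j:{..<n}. {x \<in> mps_bundles n p. bundle_contains x it}"
  have fin: "finite ?S" using finite_mps_bundles by auto
  have "(\<Sum>(j, x)\<in>?S. P j x) = (\<Sum>j<n. \<Sum>x\<in>{x \<in> mps_bundles n p. bundle_contains x it}. P j x)"
    by (rule sum.Sigma[symmetric]) (simp_all add: finite_mps_bundles)
  also have "\<dots> = 1" using assms(1,2) by (simp add: is_assignment_def)
  finally have "(\<Sum>(j, x)\<in>?S. P j x) = 1" .
  moreover have "\<forall>(j, x)\<in>?S. 0 \<le> P j x" using assms(1) by (auto simp: is_assignment_def)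
  ultimately show ?thesis
    using assms sum_eq_one_others_zero[OF fin, of "\<lambda>(j, x). P j x" "(j, x)" "(j', y)"] by auto
qed

lemma decomposable_linear_bound:
  assumes "decomposable n p P" "S \<subseteq> {..<n} \<times> mps_bundles n p"
    and bound: "\<And>Q. is_discrete_assignment n p Q \<Longrightarrow> (\<Sum>(j, x)\<in>S. c j x * Q j x) \<le> b"
  shows "(\<Sum>(j, x)\<in>S. c j x * P j x) \<le> b"
proof -
  obtain K and Q :: "nat \<Rightarrow> assignment" and w where
    Q: "\<forall>l<K. is_discrete_assignment n p (Q l) \<and> 0 \<le> w l" and w: "(\<Sum>l<K. w l) = 1"
    and P: "\<forall>j<n. \<forall>x\<in>mps_bundles n p. P j x = (\<Sum>l<K. w l * Q l j x)"
    using assms(1) unfolding decomposable_def by blast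
  have "(\<Sum>(j, x)\<in>S. c j x * P j x) = (\<Sum>(j, x)\<in>S. \<Sum>l<K. w l * (c j x * Q l j x))"
    using assms(2) P by (intro sum.cong) (auto simp: sum_distrib_left mult.left_commute)
  also have "\<dots> = (\<Sum>l<K. w l * (\<Sum>(j, x)\<in>S. c j x * Q l j x))"
    unfolding sum_distrib_left case_prod_unfold by (rule sum.swap)
  also have "\<dots> \<le> (\<Sum>l<K. w l * b)"
    using Q bound by (intro sum_mono mult_left_mono) auto
  also have "\<dots> = b" using w by (simp add: sum_distrib_right[symmetric])
  finally show ?thesis .
qed

lemma mps_bundles_3_2: "mps_bundles 3 2 = {[0,0],[0,1],[0,2],[1,0],[1,1],[1,2],[2,0],[2,1],[2,2]}"
proof (intro set_eqI iffI)
  fix x assume "x \<in> mps_bundles 3 2"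
  then obtain a b where "x = [a, b]" "a < 3" "b < 3"
    by (auto simp: mps_bundles_def numeral_2_eq_2 length_Suc_conv All_less_Suc)
  moreover have "a = 0 \<or> a = 1 \<or> a = 2" "b = 0 \<or> b = 1 \<or> b = 2"
    using \<open>a < 3\<close> \<open>b < 3\<close> by arith+
  ultimately show "x \<in> {[0,0],[0,1],[0,2],[1,0],[1,1],[1,2],[2,0],[2,1],[2,2]}"
    by auto
next
  fix x :: bndl assume "x \<in> {[0,0],[0,1],[0,2],[1,0],[1,1],[1,2],[2,0],[2,1],[2,2]}"
  then show "x \<in> mps_bundles 3 2"
    by (auto simp: mps_bundles_def numeral_2_eq_2 All_less_Suc)
qed

lemma mps_items_3_2: "mps_items 3 2 = {(0,0),(0,1),(0,2),(1,0),(1,1),(1,2)}"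
  by (auto simp: mps_items_def numeral_2_eq_2 numeral_3_eq_3 less_Suc_eq)

definition ex_schedule :: "(real \<times> bndl list) list" where
  "ex_schedule =
    [(1/3,  [[0,0], [0,0], [0,1]]),
     (1/6,  [[1,0], [1,0], [1,1]]),
     (1/6,  [[1,1], [1,2], [1,1]]),
     (1/12, [[2,1], [2,2], [2,1]]),
     (1/4,  [[2,2], [2,2], [2,2]])]"

lemma ex_phase_eats:
  assumes "k < 5" "j < 3"
  shows "eats 3 2 ex_pref (remaining_supply (take k ex_schedule)) j = snd (ex_schedule ! k) ! j"
proof -
  have "k = 0 \<or> k = 1 \<or> k = 2 \<or> k = 3 \<or> k = 4" "j = 0 \<or> j = 1 \<or> j = 2"
    using assms by arith+
  then show ?thesis
    by - (elim disjE; rule eats_eqI;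
        simp add: available_two_types mps_bundles_3_2 ex_pref_def lex_pref_two_types lex_pref_irrefl
          ex_imp_def ex_rank_def ex_schedule_def remaining_supply_def demand_def bundle_contains_def)
qed

lemma ex_phase:
  assumes "k < 5"
  shows "mps_phase 3 2 ex_pref (remaining_supply (take k ex_schedule)) (ex_schedule ! k)"
proof -
  have k: "k = 0 \<or> k = 1 \<or> k = 2 \<or> k = 3 \<or> k = 4" using assms by arith
  let ?s = "remaining_supply (take k ex_schedule)" and ?E = "snd (ex_schedule ! k)"
  have len: "length ?E = 3" using k by (auto simp: ex_schedule_def)
  have eats: "\<forall>j<3. eats 3 2 ex_pref ?s j = ?E ! j" using assms ex_phase_eats by blast
  have "next_event 3 2 ex_pref ?s = fst (ex_schedule ! k)"
    unfolding next_event_eq_demand[OF len eats] mps_items_3_2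
    using k by (elim disjE) (simp_all add: ex_schedule_def remaining_supply_def demand_def bundle_contains_def)
  moreover have "\<exists>it\<in>mps_items 3 2. 0 < ?s it"
    using k by (auto simp: mps_items_3_2 ex_schedule_def remaining_supply_def demand_def bundle_contains_def)
  ultimately show ?thesis using len eats by (simp add: mps_phase_def)
qed

lemma ex_is_mps_schedule: "is_mps_schedule 3 2 ex_pref ex_schedule"
proof -
  have "\<forall>k<length ex_schedule. mps_phase 3 2 ex_pref (remaining_supply (take k ex_schedule)) (ex_schedule ! k)"
    using ex_phase by (simp add: ex_schedule_def)
  moreover have "\<forall>it\<in>mps_items 3 2. remaining_supply ex_schedule it = 0"
    by (simp add: mps_items_3_2 ex_schedule_def remaining_supply_def demand_def bundle_contains_def)
  ultimately show ?thesis by (simp add: is_mps_schedule_def ex_schedule_def)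
qed

lemma ex_discrete_bound:
  assumes "is_discrete_assignment 3 2 Q"
  shows "Q 2 [2,2] \<le> Q 0 [0,1] + Q 0 [1,1] + Q 1 [0,1] + Q 1 [1,1]"
proof -
  have asg: "is_assignment 3 2 Q" using assms by (simp add: is_discrete_assignment_def)
  have nonneg: "0 \<le> Q j x" if "j < 3" "x \<in> mps_bundles 3 2" for j x
    using asg that by (simp add: is_assignment_def)
  have "Q 2 [2,2] \<in> {0, 1}" using assms by (simp add: is_discrete_assignment_def mps_bundles_3_2)
  then consider "Q 2 [2,2] = 0" | "Q 2 [2,2] = 1" by blast
  then show ?thesis
  proof cases
    case 1
    then show ?thesis using nonneg[of 0 "[0,1]"] nonneg[of 0 "[1,1]"] nonneg[of 1 "[0,1]"] nonneg[of 1 "[1,1]"]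
      by (simp add: mps_bundles_3_2)
  next
    case 2
    have "{x \<in> mps_bundles 3 2. bundle_contains x (1, 1)} = {[0,1], [1,1], [2,1]}"
      by (auto simp: mps_bundles_3_2 bundle_contains_def)
    moreover have "{..<3::nat} = {0, 1, 2}" by auto
    ultimately have "(\<Sum>j\<in>{0, 1, 2}. \<Sum>x\<in>{[0,1], [1,1], [2,1]}. Q j x) = 1"
      using asg by (simp add: is_assignment_def mps_items_3_2)
    moreover have "Q 2 x = 0" if "x \<in> {[0,1], [1,1], [2,1]}" for x
      using assignment_row_exclusive[OF asg _ _ 2, of x] that by (auto simp: mps_bundles_3_2)
    \<comment> \<open>agent 2 already holds item (0, 2), which also lies in [2,1]\<close>
    moreover have "Q j [2,1] = 0" if "j < 2" for j
      using assignment_item_exclusive[OF asg _ _ _ _ 2, of "(0, 2)" j "[2,1]"] that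
      by (simp add: mps_items_3_2 mps_bundles_3_2 bundle_contains_def)
    ultimately show ?thesis using 2 by simp
  qed
qed

theorem mainTheorem15:
  shows "\<not> decomposable 3 2 (MPS 3 2 ex_pref)"
proof
  let ?S = "{(2, [2,2]), (0, [0,1]), (0, [1,1]), (1, [0,1]), (1, [1,1])} :: (nat \<times> bndl) set"
  let ?c = "\<lambda>j x. if (j, x) = (2, [2,2]) then 1 else - 1 :: real"
  assume "decomposable 3 2 (MPS 3 2 ex_pref)"
  moreover have "?S \<subseteq> {..<3} \<times> mps_bundles 3 2" by (simp add: mps_bundles_3_2)
  moreover have "(\<Sum>(j, x)\<in>?S. ?c j x * Q j x) \<le> 0" if "is_discrete_assignment 3 2 Q" for Q
    using ex_discrete_bound[OF that] by simp
  ultimately have "(\<Sum>(j, x)\<in>?S. ?c j x * MPS 3 2 ex_pref j x) \<le> 0"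
    by (rule decomposable_linear_bound)
  then show False
    by (simp add: MPS_eq_eaten[OF ex_is_mps_schedule] eaten_def ex_schedule_def)
qed

end
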